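(* Let $\mathbf{b}\in H_{1,2,2}$ have odd norm. Then there exist units $\mathbf{u},\mathbf{u}_1$ of $H_{1,2,2}$ such that $\mathbf{b}\mathbf{u}\equiv\mathbf{u}_1\mathbf{b}\equiv 1 \pmod 2$, i.e. $\mathbf{b}\mathbf{u}-1\in 2H_{1,2,2}$ and $\mathbf{u}_1\mathbf{b}-1\in 2H_{1,2,2}$.
   Context: Let $\mathbf{i},\mathbf{j},\mathbf{k}$ be the standard quaternion units; $\overline{\mathbf{q}}$ is quaternion conjugation and $N(\mathbf{q})=\mathbf{q}\overline{\mathbf{q}}$. $H_{1,2,2}$ is the subring of the quaternions equal to the $\mathbb{Z}$-module generated by $\mathbf{v}_1=1$, $\mathbf{v}_2=\mathbf{i}$, $\mathbf{v}_3=\tfrac12(1+\mathbf{i}+\sqrt2\,\mathbf{j})$, $\mathbf{v}_4=\tfrac12(1+\mathbf{i}+\sqrt2\,\mathbf{k})$. A unit is an element invertible in $H_{1,2,2}$ (equivalently of norm 1). *)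

theory Defs
  imports Complex_Main
begin

datatype quat = Quat (qre: real) (qi: real) (qj: real) (qk: real)

definition qadd :: "quat \<Rightarrow> quat \<Rightarrow> quat" where
  "qadd p q = Quat (qre p + qre q) (qi p + qi q) (qj p + qj q) (qk p + qk q)"

definition qsub :: "quat \<Rightarrow> quat \<Rightarrow> quat" where
  "qsub p q = Quat (qre p - qre q) (qi p - qi q) (qj p - qj q) (qk p - qk q)"

definition qscale :: "real \<Rightarrow> quat \<Rightarrow> quat" where
  "qscale r q = Quat (r * qre q) (r * qi q) (r * qj q) (r * qk q)"

definition qmul :: "quat \<Rightarrow> quat \<Rightarrow> quat" where
  "qmul p q = Quat
     (qre p * qre q - qi p * qi q - qj p * qj q - qk p * qk q)
     (qre p * qi q + qi p * qre q + qj p * qk q - qk p * qj q)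
     (qre p * qj q - qi p * qk q + qj p * qre q + qk p * qi q)
     (qre p * qk q + qi p * qj q - qj p * qi q + qk p * qre q)"

definition qone :: quat where "qone = Quat 1 0 0 0"

definition qconj :: "quat \<Rightarrow> quat" where
  "qconj q = Quat (qre q) (- qi q) (- qj q) (- qk q)"

definition qnorm :: "quat \<Rightarrow> real" where
  "qnorm q = qre (qmul q (qconj q))"

definition v1 :: quat where "v1 = Quat 1 0 0 0"
definition v2 :: quat where "v2 = Quat 0 1 0 0"
definition v3 :: quat where "v3 = Quat (1/2) (1/2) (sqrt 2 / 2) 0"
definition v4 :: quat where "v4 = Quat (1/2) (1/2) 0 (sqrt 2 / 2)"

definition H122 :: "quat set" where
  "H122 = {qadd (qadd (qscale (of_int a) v1) (qscale (of_int b) v2))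
                (qadd (qscale (of_int c) v3) (qscale (of_int d) v4)) | a b c d :: int. True}"

definition is_unit_H122 :: "quat \<Rightarrow> bool" where
  "is_unit_H122 u \<longleftrightarrow> u \<in> H122 \<and> (\<exists>w\<in>H122. qmul u w = qone \<and> qmul w u = qone)"

definition cong2_H122 :: "quat \<Rightarrow> quat \<Rightarrow> bool" where
  "cong2_H122 x y \<longleftrightarrow> (\<exists>z\<in>H122. qsub x y = qscale 2 z)"

end

theory Submission
  imports Defs
begin

text \<open>Since \<open>b * conj b = conj b * b = N(b)\<close> and \<open>N(b)\<close> is odd, \<open>conj b\<close> is a two-sided
  inverse of \<open>b\<close> modulo 2. A check of the sixteen residue classes
  modulo 2 shows that every class of odd norm contains an element of norm 1, i.e. a unit; the unit
  \<open>u\<close> in the class of \<open>conj b\<close> then satisfies \<open>b u \<equiv> u b \<equiv> 1 (mod 2)\<close>.\<close>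

lemma qmul_qconj_right: "qmul q (qconj q) = Quat (qnorm q) 0 0 0"
  by (simp add: qnorm_def qmul_def qconj_def algebra_simps)

lemma qmul_qconj_left: "qmul (qconj q) q = Quat (qnorm q) 0 0 0"
  by (simp add: qnorm_def qmul_def qconj_def algebra_simps)

lemma qnorm_qconj: "qnorm (qconj q) = qnorm q"
  by (simp add: qnorm_def qmul_def qconj_def)

lemma qmul_qsub_distrib_left: "qmul z (qsub x y) = qsub (qmul z x) (qmul z y)"
  by (simp add: qmul_def qsub_def algebra_simps)

lemma qmul_qsub_distrib_right: "qmul (qsub x y) z = qsub (qmul x z) (qmul y z)"
  by (simp add: qmul_def qsub_def algebra_simps)

lemma qmul_qscale_left: "qmul (qscale r x) y = qscale r (qmul x y)"
  by (simp add: qmul_def qscale_def algebra_simps)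

lemma qmul_qscale_right: "qmul x (qscale r y) = qscale r (qmul x y)"
  by (simp add: qmul_def qscale_def algebra_simps)

lemma qsub_trans_eq_qadd: "qsub x z = qadd (qsub x y) (qsub y z)"
  by (simp add: qsub_def qadd_def)

lemma qscale_qadd: "qscale r (qadd x y) = qadd (qscale r x) (qscale r y)"
  by (simp add: qscale_def qadd_def algebra_simps)

text \<open>The element \<open>a v\<^sub>1 + b v\<^sub>2 + c v\<^sub>3 + d v\<^sub>4\<close>.\<close>

definition H122_elem :: "int \<Rightarrow> int \<Rightarrow> int \<Rightarrow> int \<Rightarrow> quat" where
  "H122_elem a b c d = Quat (a + (c + d) / 2) (b + (c + d) / 2) (c * sqrt 2 / 2) (d * sqrt 2 / 2)"

definition H122_normform :: "int \<Rightarrow> int \<Rightarrow> int \<Rightarrow> int \<Rightarrow> int" where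
  "H122_normform a b c d = a*a + b*b + (c + d)*(a + b) + c*c + d*d + c*d"

lemma H122_eq_range_elem: "H122 = {H122_elem a b c d | a b c d. True}"
  unfolding H122_def
  by (simp add: H122_elem_def qadd_def qscale_def v1_def v2_def v3_def v4_def
      algebra_simps add_divide_distrib)

lemma H122_elem_in_H122 [simp]: "H122_elem a b c d \<in> H122"
  by (auto simp: H122_eq_range_elem)

lemma H122_cases:
  assumes "x \<in> H122"
  obtains a b c d where "x = H122_elem a b c d"
  using assms by (auto simp: H122_eq_range_elem)

lemma qmul_H122_elem: "qmul (H122_elem a b c d) (H122_elem p q r s) = H122_elem
    (a*p - b*q - b*r - c*r - d*q - d*r - d*s)
    (a*q + b*p + b*s + c*q + c*s - d*r)
    (a*r - b*s + c*p + c*r + d*q + d*r)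
    (a*s + b*r - c*q + d*p + d*r + d*s)"
proof -
  have "sqrt 2 * sqrt 2 = (2::real)" by simp
  then show ?thesis
    unfolding qmul_def H122_elem_def quat.inject quat.sel
    by (simp only: of_int_add of_int_diff of_int_mult) (simp add: field_simps)
qed

lemma qadd_H122_elem:
  "qadd (H122_elem a b c d) (H122_elem p q r s) = H122_elem (a + p) (b + q) (c + r) (d + s)"
  by (simp add: qadd_def H122_elem_def algebra_simps add_divide_distrib)

lemma qsub_H122_elem:
  "qsub (H122_elem a b c d) (H122_elem p q r s) = H122_elem (a - p) (b - q) (c - r) (d - s)"
  by (simp add: qsub_def H122_elem_def algebra_simps diff_divide_distrib)

lemma qscale_2_H122_elem: "qscale 2 (H122_elem a b c d) = H122_elem (2*a) (2*b) (2*c) (2*d)"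
  by (simp add: qscale_def H122_elem_def algebra_simps)

lemma qconj_H122_elem: "qconj (H122_elem a b c d) = H122_elem (a + c + d) (- b) (- c) (- d)"
  by (simp add: qconj_def H122_elem_def field_simps)

lemma qnorm_H122_elem: "qnorm (H122_elem a b c d) = of_int (H122_normform a b c d)"
proof -
  have "sqrt 2 * sqrt 2 = (2::real)" by simp
  then show ?thesis
    unfolding qnorm_def qmul_def qconj_def H122_elem_def H122_normform_def quat.sel
    by (simp only: of_int_add of_int_diff of_int_mult) (simp add: field_simps)
qed

lemma qone_eq_H122_elem: "qone = H122_elem 1 0 0 0"
  by (simp add: qone_def H122_elem_def)

lemma qmul_in_H122: "x \<in> H122 \<Longrightarrow> y \<in> H122 \<Longrightarrow> qmul x y \<in> H122"
  by (elim H122_cases) (simp add: qmul_H122_elem)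

lemma qadd_in_H122: "x \<in> H122 \<Longrightarrow> y \<in> H122 \<Longrightarrow> qadd x y \<in> H122"
  by (elim H122_cases) (simp add: qadd_H122_elem)

lemma qconj_in_H122: "x \<in> H122 \<Longrightarrow> qconj x \<in> H122"
  by (elim H122_cases) (simp add: qconj_H122_elem)

lemma is_unit_H122_if_qnorm_eq_1:
  assumes "u \<in> H122" "qnorm u = 1"
  shows "is_unit_H122 u"
  unfolding is_unit_H122_def
  using assms by (auto simp: qmul_qconj_right qmul_qconj_left qone_def qconj_in_H122
      intro!: bexI[of _ "qconj u"])

lemma cong2_H122_trans: "cong2_H122 x y \<Longrightarrow> cong2_H122 y z \<Longrightarrow> cong2_H122 x z"
  unfolding cong2_H122_def
  by (metis qsub_trans_eq_qadd qscale_qadd qadd_in_H122)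

lemma cong2_H122_mult_left:
  "z \<in> H122 \<Longrightarrow> cong2_H122 x y \<Longrightarrow> cong2_H122 (qmul z x) (qmul z y)"
  unfolding cong2_H122_def
  by (metis qmul_qsub_distrib_left qmul_qscale_right qmul_in_H122)

lemma cong2_H122_mult_right:
  "z \<in> H122 \<Longrightarrow> cong2_H122 x y \<Longrightarrow> cong2_H122 (qmul x z) (qmul y z)"
  unfolding cong2_H122_def
  by (metis qmul_qsub_distrib_right qmul_qscale_left qmul_in_H122)

lemma cong2_H122_elem:
  assumes "even (a - p)" "even (b - q)" "even (c - r)" "even (d - s)"
  shows "cong2_H122 (H122_elem a b c d) (H122_elem p q r s)"
proof -
  from assms obtain a' b' c' d' where
    "a - p = 2*a'" "b - q = 2*b'" "c - r = 2*c'" "d - s = 2*d'"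
    by (elim evenE)
  then have "qsub (H122_elem a b c d) (H122_elem p q r s) = qscale 2 (H122_elem a' b' c' d')"
    by (simp add: qsub_H122_elem qscale_2_H122_elem)
  then show ?thesis
    unfolding cong2_H122_def by (rule bexI[OF _ H122_elem_in_H122])
qed

lemma cong2_H122_odd_real:
  assumes "odd n"
  shows "cong2_H122 (Quat (of_int n) 0 0 0) qone"
proof -
  have "Quat (of_int n) 0 0 0 = H122_elem n 0 0 0"
    by (simp add: H122_elem_def)
  then show ?thesis
    using assms by (simp add: qone_eq_H122_elem cong2_H122_elem)
qed

lemma H122_normform_odd_class_has_norm_1:
  assumes "odd (H122_normform a b c d)"
  obtains p q r s where "H122_normform p q r s = 1"
    and "even (a - p)" "even (b - q)" "even (c - r)" "even (d - s)"
proof -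
  have "\<exists>(p, q, r, s) \<in> set
      [(1, 0, 0, 0), (0, 1, 0, 0), (0, 0, 1, 0), (0, 0, 0, 1), (0, 0, -1, 1), (0, -1, 0, 1),
       (0, -1, 1, 0), (-1, 0, 0, 1), (-1, 0, 1, 0), (1, 1, 0, -1), (1, 1, -1, 0), (-1, -1, 1, 1)].
      H122_normform p q r s = 1 \<and> even (a - p) \<and> even (b - q) \<and> even (c - r) \<and> even (d - s)"
    using assms unfolding H122_normform_def
    by (simp add: even_add even_mult_iff even_diff)
      (cases "even a"; cases "even b"; cases "even c"; cases "even d"; simp)
  then show thesis
    using that by blast
qed

lemma odd_qnorm_cong2_H122_unit:
  assumes "x \<in> H122" "qnorm x = of_int n" "odd n"
  obtains u where "is_unit_H122 u" "cong2_H122 u x"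
proof -
  obtain a b c d where x: "x = H122_elem a b c d"
    using assms(1) by (rule H122_cases)
  have "odd (H122_normform a b c d)"
    using assms(2,3) by (simp add: x qnorm_H122_elem)
  then obtain p q r s where "H122_normform p q r s = 1"
    and "even (p - a)" "even (q - b)" "even (r - c)" "even (s - d)"
    by (rule H122_normform_odd_class_has_norm_1) (simp_all add: even_diff)
  then show thesis
    by (intro that[of "H122_elem p q r s"])
      (simp_all add: x is_unit_H122_if_qnorm_eq_1 qnorm_H122_elem cong2_H122_elem)
qed

theorem corollary9:
  assumes "b \<in> H122"
    and "\<exists>n::int. odd n \<and> qnorm b = of_int n"
  shows "\<exists>u u1. is_unit_H122 u \<and> is_unit_H122 u1 \<and>
           cong2_H122 (qmul b u) qone \<and> cong2_H122 (qmul u1 b) qone"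
proof -
  obtain n :: int where n: "odd n" "qnorm b = of_int n"
    using assms(2) by blast
  have conj_b: "qconj b \<in> H122"
    using assms(1) by (rule qconj_in_H122)
  moreover have "qnorm (qconj b) = of_int n"
    using n(2) by (simp add: qnorm_qconj)
  ultimately obtain u where u: "is_unit_H122 u" "cong2_H122 u (qconj b)"
    using n(1) by (rule odd_qnorm_cong2_H122_unit)
  have "cong2_H122 (qmul b u) (qmul b (qconj b))"
    using assms(1) u(2) by (rule cong2_H122_mult_left)
  moreover have "cong2_H122 (qmul u b) (qmul (qconj b) b)"
    using assms(1) u(2) by (rule cong2_H122_mult_right)
  moreover have "cong2_H122 (Quat (qnorm b) 0 0 0) qone"
    using n by (simp add: cong2_H122_odd_real)
  ultimately show ?thesis
    using u(1) by (metis qmul_qconj_right qmul_qconj_left cong2_H122_trans)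
qed

end
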